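(* For every fixed positive integer $r$ there exist positive constants $c_0$ and $c$, depending only on $r$, such that the following holds. Let $d \geq 1$ and $h \geq 0$ be fixed integers and put $D = \max\{d,h\}$. Then for all positive integers $t$ and $x$ with $x \leq \frac{c_0}{D^r}\, t$, $$R(t,d,h,r;x] \geq \frac{c + o(1)}{D^{r+1}},$$ where $o(1)$ denotes a function of $t$ that tends to $0$ as $t \to \infty$.
   Context: Let $T=(t_{ij})$ be a $t\times n$ binary matrix over $\{0,1\}$. For $j\in[n]=\{1,\dots,n\}$ let $C_j=\{i\in[t]: t_{ij}=1\}$ be the support of the $j$th column. For disjoint sets $A,B\subseteq[n]$ define $Z_T(A,B)=\left|\left(\bigcap_{j\in B}C_j\right)\setminus\left(\bigcup_{j\in A}C_j\right)\right|$ and $Y_T(A,B)=\left|\left(\bigcap_{j\in B}C_j\right)\cap\left(\bigcup_{j\in A}C_j\right)\right|$. For positive integers $d,r,z$, $T$ is $(d,r;z]$-disjunct if $Z_T(A,B)\geq z$ for every pair of disjoint $A,B\subseteq[n]$ with $|A|=d$, $|B|=r$. For a positive integer $r$ and nonnegative integers $h,y$, $T$ is $(h,r;y]$-inclusive if $Y_T(A,B)\leq y$ for every pair of disjoint $A,B\subseteq[n]$ with $|A|=h$, $|B|=r$. For positive integers $d,r,x$ and a nonnegative integer $h$, $T$ is $(d,h,r;x]$-inclusively disjunct if there exist integers $z>0$ and $y\geq 0$ with $z-y\geq x$ such that $T$ is both $(d,r;z]$-disjunct and $(h,r;y]$-inclusive. Let $N(t,d,h,r;x]$ be the maximum $n$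 such that a $t\times n$ $(d,h,r;x]$-inclusively disjunct matrix exists, and $R(t,d,h,r;x] = \frac{\log_2 N(t,d,h,r;x]}{t}$. *)

theory Defs
  imports Complex_Main
begin

text \<open>A t x n binary matrix T = (t_ij) is represented by a predicate T :: nat => nat => bool,
  where T i j means t_ij = 1; only the entries with i in [t] = {1..t}, j in [n] = {1..n} matter.\<close>

definition col :: "nat \<Rightarrow> (nat \<Rightarrow> nat \<Rightarrow> bool) \<Rightarrow> nat \<Rightarrow> nat set" where
  "col t T j = {i \<in> {1..t}. T i j}"

definition Zval :: "nat \<Rightarrow> (nat \<Rightarrow> nat \<Rightarrow> bool) \<Rightarrow> nat set \<Rightarrow> nat set \<Rightarrow> nat" where
  "Zval t T A B = card (({1..t} \<inter> (\<Inter>j\<in>B. col t T j)) - (\<Union>j\<in>A. col t T j))"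

definition Yval :: "nat \<Rightarrow> (nat \<Rightarrow> nat \<Rightarrow> bool) \<Rightarrow> nat set \<Rightarrow> nat set \<Rightarrow> nat" where
  "Yval t T A B = card (({1..t} \<inter> (\<Inter>j\<in>B. col t T j)) \<inter> (\<Union>j\<in>A. col t T j))"

definition disjunct :: "nat \<Rightarrow> nat \<Rightarrow> (nat \<Rightarrow> nat \<Rightarrow> bool) \<Rightarrow> nat \<Rightarrow> nat \<Rightarrow> nat \<Rightarrow> bool" where
  "disjunct t n T d r z \<longleftrightarrow>
     (\<forall>A B. A \<subseteq> {1..n} \<and> B \<subseteq> {1..n} \<and> A \<inter> B = {} \<and> card A = d \<and> card B = r
        \<longrightarrow> Zval t T A B \<ge> z)"

definition inclusive :: "nat \<Rightarrow> nat \<Rightarrow> (nat \<Rightarrow> nat \<Rightarrow> bool) \<Rightarrow> nat \<Rightarrow> nat \<Rightarrow> nat \<Rightarrow> bool" where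
  "inclusive t n T h r y \<longleftrightarrow>
     (\<forall>A B. A \<subseteq> {1..n} \<and> B \<subseteq> {1..n} \<and> A \<inter> B = {} \<and> card A = h \<and> card B = r
        \<longrightarrow> Yval t T A B \<le> y)"

definition incl_disjunct ::
  "nat \<Rightarrow> nat \<Rightarrow> (nat \<Rightarrow> nat \<Rightarrow> bool) \<Rightarrow> nat \<Rightarrow> nat \<Rightarrow> nat \<Rightarrow> nat \<Rightarrow> bool" where
  "incl_disjunct t n T d h r x \<longleftrightarrow>
     (\<exists>z y. z > 0 \<and> int z - int y \<ge> int x \<and> disjunct t n T d r z \<and> inclusive t n T h r y)"

definition Nmax :: "nat \<Rightarrow> nat \<Rightarrow> nat \<Rightarrow> nat \<Rightarrow> nat \<Rightarrow> nat" where
  "Nmax t d h r x = (GREATEST n. \<exists>T. incl_disjunct t n T d h r x)"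

definition Rate :: "nat \<Rightarrow> nat \<Rightarrow> nat \<Rightarrow> nat \<Rightarrow> nat \<Rightarrow> real" where
  "Rate t d h r x = log 2 (real (Nmax t d h r x)) / real t"

end

(*
  Random construction and the union bound. Put D = max d h and p = 1/(512 D), fill a t x 2^s
  matrix with independent Bernoulli(p) entries and cut its rows into L = t div m blocks of
  m = 8 * 512^r * D^r rows. For |A| = d, |B| = r a row counts for Z_T(A,B) with probability
  p^r (1-p)^d >= p^r/2 = 4/m, so a block contains no such row with probability at most 1/16, and
  half of the blocks contain none with probability at most 2^L 16^(-L/2) = 2^-L. For |A| = h a
  row counts for Y_T(A,B) with probability at most h p^(r+1) <= 1/(64 m), so more than L/8 such
  rows occur with probability at most 2^-(L/8). There are at most 2^(s (D + r)) pairs (A,B), so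
  once s (D + r) is a little below L/8 some matrix avoids every bad event; it has
  z = floor(L/2) + 1 and y = floor((L+1)/8), hence z - y >= L/8 >= x, and log2 N >= s is of
  order t / D^(r+1).
*)

theory Submission
  imports Defs "HOL-Probability.Probability"
begin

definition z_rows :: "nat set \<Rightarrow> nat set \<Rightarrow> (nat \<Rightarrow> bool) set" where
  "z_rows A B = {v. (\<forall>j\<in>B. v j) \<and> (\<forall>j\<in>A. \<not> v j)}"

definition y_rows :: "nat set \<Rightarrow> nat set \<Rightarrow> (nat \<Rightarrow> bool) set" where
  "y_rows A B = {v. (\<forall>j\<in>B. v j) \<and> (\<exists>j\<in>A. v j)}"

lemma Zval_eq_card_z_rows: "Zval t T A B = card {i \<in> {1..t}. T i \<in> z_rows A B}"
  unfolding Zval_def z_rows_def col_def by (rule arg_cong[where f = card]) auto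

lemma Yval_eq_card_y_rows: "Yval t T A B = card {i \<in> {1..t}. T i \<in> y_rows A B}"
  unfolding Yval_def y_rows_def col_def by (rule arg_cong[where f = card]) auto

definition disjoint_pairs :: "nat \<Rightarrow> nat \<Rightarrow> nat \<Rightarrow> (nat set \<times> nat set) set" where
  "disjoint_pairs n a b =
     {(A, B). A \<subseteq> {1..n} \<and> B \<subseteq> {1..n} \<and> A \<inter> B = {} \<and> card A = a \<and> card B = b}"

lemma disjunct_iff_z_rows:
  "disjunct t n T d r z \<longleftrightarrow>
     (\<forall>(A, B) \<in> disjoint_pairs n d r. z \<le> card {i \<in> {1..t}. T i \<in> z_rows A B})"
  by (auto simp: disjunct_def disjoint_pairs_def Zval_eq_card_z_rows)

lemma inclusive_iff_y_rows:
  "inclusive t n T h r y \<longleftrightarrow>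
     (\<forall>(A, B) \<in> disjoint_pairs n h r. card {i \<in> {1..t}. T i \<in> y_rows A B} \<le> y)"
  by (auto simp: inclusive_def disjoint_pairs_def Yval_eq_card_y_rows)

lemma finite_disjoint_pairs: "finite (disjoint_pairs n a b)"
  and card_disjoint_pairs_le: "card (disjoint_pairs n a b) \<le> (n choose a) * (n choose b)"
proof -
  have sub: "disjoint_pairs n a b \<subseteq> {A. A \<subseteq> {1..n} \<and> card A = a} \<times> {B. B \<subseteq> {1..n} \<and> card B = b}"
    by (auto simp: disjoint_pairs_def)
  have fin: "finite ({A. A \<subseteq> {1..n} \<and> card A = a} \<times> {B. B \<subseteq> {1..n} \<and> card B = b})"
    by auto
  show "finite (disjoint_pairs n a b)"
    using sub fin by (rule finite_subset)
  show "card (disjoint_pairs n a b) \<le> (n choose a) * (n choose b)"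
    using card_mono[OF fin sub] by (simp add: card_cartesian_product n_subsets)
qed

definition bernoulli_row :: "nat \<Rightarrow> real \<Rightarrow> (nat \<Rightarrow> bool) pmf" where
  "bernoulli_row n p = Pi_pmf {1..n} False (\<lambda>_. bernoulli_pmf p)"

definition bernoulli_matrix :: "nat \<Rightarrow> nat \<Rightarrow> real \<Rightarrow> (nat \<Rightarrow> nat \<Rightarrow> bool) pmf" where
  "bernoulli_matrix t n p = Pi_pmf {1..t} (\<lambda>_. False) (\<lambda>_. bernoulli_row n p)"

lemma prob_z_rows:
  fixes p :: real
  assumes "A \<subseteq> {1..n}" "B \<subseteq> {1..n}" "A \<inter> B = {}" "0 \<le> p" "p \<le> 1"
  shows "measure_pmf.prob (bernoulli_row n p) (z_rows A B) = p ^ card B * (1 - p) ^ card A"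
proof -
  have "z_rows A B = Pi {1..n} (\<lambda>j. if j \<in> B then {True} else if j \<in> A then {False} else UNIV)"
    using assms by (auto simp: z_rows_def Pi_def subset_iff)
  then have "measure_pmf.prob (bernoulli_row n p) (z_rows A B)
      = (\<Prod>j\<in>{1..n}. measure_pmf.prob (bernoulli_pmf p)
           (if j \<in> B then {True} else if j \<in> A then {False} else UNIV))"
    by (simp add: bernoulli_row_def measure_Pi_pmf_Pi)
  also have "\<dots> = (\<Prod>j\<in>{1..n}. if j \<in> B then p else if j \<in> A then 1 - p else 1)"
    using assms by (intro prod.cong) (auto simp: measure_pmf_single)
  also have "\<dots> = (\<Prod>j\<in>B. p) * (\<Prod>j\<in>{1..n} - B. if j \<in> A then 1 - p else 1)"
    using assms by (subst prod.If_cases) (auto simp: Int_absorb1 Diff_eq)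
  also have "(\<Prod>j\<in>{1..n} - B. if j \<in> A then 1 - p else 1) = (\<Prod>j\<in>A. 1 - p)"
    using assms
    by (subst prod.If_cases) (auto simp: Int_absorb1 intro!: arg_cong[where f = "\<lambda>X. (1 - p) ^ card X"])
  finally show ?thesis
    by simp
qed

lemma prob_y_rows_le:
  fixes p :: real
  assumes "A \<subseteq> {1..n}" "B \<subseteq> {1..n}" "A \<inter> B = {}" "0 \<le> p" "p \<le> 1"
  shows "measure_pmf.prob (bernoulli_row n p) (y_rows A B) \<le> card A * p ^ (card B + 1)"
proof -
  have "y_rows A B = (\<Union>a\<in>A. z_rows {} (insert a B))"
    by (auto simp: y_rows_def z_rows_def)
  then have "measure_pmf.prob (bernoulli_row n p) (y_rows A B)
      \<le> (\<Sum>a\<in>A. measure_pmf.prob (bernoulli_row n p) (z_rows {} (insert a B)))"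
    using finite_subset[OF assms(1)] by (auto intro: measure_pmf.finite_measure_subadditive_finite)
  also have "\<dots> = (\<Sum>a\<in>A. p ^ (card B + 1))"
  proof (intro sum.cong refl)
    fix a assume "a \<in> A"
    with assms have "a \<notin> B" "finite B"
      by (auto intro: finite_subset)
    with assms \<open>a \<in> A\<close>
    show "measure_pmf.prob (bernoulli_row n p) (z_rows {} (insert a B)) = p ^ (card B + 1)"
      by (subst prob_z_rows) auto
  qed
  finally show ?thesis
    by simp
qed

lemma prob_UN_le_mult:
  fixes q :: real
  assumes "finite P" "card P \<le> N" "0 \<le> q" "\<And>x. x \<in> P \<Longrightarrow> measure_pmf.prob M (E x) \<le> q"
  shows "measure_pmf.prob M (\<Union>x\<in>P. E x) \<le> N * q"
proof -
  have "measure_pmf.prob M (\<Union>x\<in>P. E x) \<le> (\<Sum>x\<in>P. measure_pmf.prob M (E x))"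
    using assms(1) by (intro measure_pmf.finite_measure_subadditive_finite) auto
  also have "\<dots> \<le> (\<Sum>x\<in>P. q)"
    using assms(4) by (rule sum_mono)
  also have "\<dots> \<le> N * q"
    using assms(2,3) by (simp add: mult_right_mono)
  finally show ?thesis .
qed

lemma prob_Pi_pmf_all_in:
  assumes "finite I" "S \<subseteq> I"
  shows "measure_pmf.prob (Pi_pmf I dflt (\<lambda>_. M)) {\<omega>. \<forall>i\<in>S. \<omega> i \<in> E}
           = measure_pmf.prob M E ^ card S"
proof -
  have "{\<omega>. \<forall>i\<in>S. \<omega> i \<in> E} = Pi I (\<lambda>i. if i \<in> S then E else UNIV)"
    using assms by (auto simp: Pi_def)
  then have "measure_pmf.prob (Pi_pmf I dflt (\<lambda>_. M)) {\<omega>. \<forall>i\<in>S. \<omega> i \<in> E}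
      = (\<Prod>i\<in>I. if i \<in> S then measure_pmf.prob M E else 1)"
    using assms(1) by (simp add: measure_Pi_pmf_Pi if_distrib cong: if_cong)
  also have "\<dots> = measure_pmf.prob M E ^ card S"
    using assms by (simp add: prod.If_cases Int_absorb1)
  finally show ?thesis .
qed

lemma prob_Pi_pmf_some_blocks_all_in:
  assumes "finite I" "finite J" "\<And>j. j \<in> J \<Longrightarrow> F j \<subseteq> I" "\<And>j. j \<in> J \<Longrightarrow> card (F j) = m"
    and "disjoint_family_on F J"
  shows "measure_pmf.prob (Pi_pmf I dflt (\<lambda>_. M))
           {\<omega>. \<exists>K\<subseteq>J. card K = k \<and> (\<forall>j\<in>K. \<forall>i\<in>F j. \<omega> i \<in> E)}
         \<le> (card J choose k) * measure_pmf.prob M E ^ (m * k)"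
proof -
  let ?Ks = "{K. K \<subseteq> J \<and> card K = k}"
  have "{\<omega>. \<exists>K\<subseteq>J. card K = k \<and> (\<forall>j\<in>K. \<forall>i\<in>F j. \<omega> i \<in> E)}
      = (\<Union>K\<in>?Ks. {\<omega>. \<forall>i\<in>\<Union>(F ` K). \<omega> i \<in> E})"
    by blast
  also have "measure_pmf.prob (Pi_pmf I dflt (\<lambda>_. M)) \<dots>
      \<le> card ?Ks * measure_pmf.prob M E ^ (m * k)"
  proof (rule prob_UN_le_mult[OF _ order.refl])
    show "finite ?Ks"
      using assms(2) by simp
    show "0 \<le> measure_pmf.prob M E ^ (m * k)"
      by simp
    fix K assume K: "K \<in> ?Ks"
    then have "finite K"
      using assms(2) finite_subset by blast
    moreover have "finite (F j)" if "j \<in> K" for j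
      using that K assms(1,3) finite_subset by blast
    ultimately have "card (\<Union>(F ` K)) = (\<Sum>j\<in>K. card (F j))"
      using K assms(5) by (intro card_UN_disjoint) (auto simp: disjoint_family_on_def)
    also have "\<dots> = m * k"
      using K assms(4) by (simp add: subset_iff)
    finally have card_UN: "card (\<Union>(F ` K)) = m * k" .
    have "\<Union>(F ` K) \<subseteq> I"
      using K assms(3) by blast
    then have "measure_pmf.prob (Pi_pmf I dflt (\<lambda>_. M)) {\<omega>. \<forall>i\<in>\<Union>(F ` K). \<omega> i \<in> E}
        = measure_pmf.prob M E ^ (m * k)"
      by (subst prob_Pi_pmf_all_in[OF assms(1)]) (simp_all only: card_UN)
    then show "measure_pmf.prob (Pi_pmf I dflt (\<lambda>_. M)) {\<omega>. \<forall>i\<in>\<Union>(F ` K). \<omega> i \<in> E}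
        \<le> measure_pmf.prob M E ^ (m * k)"
      by (rule eq_refl)
  qed
  also have "card ?Ks = card J choose k"
    using assms(2) by (rule n_subsets)
  finally show ?thesis .
qed

definition row_block :: "nat \<Rightarrow> nat \<Rightarrow> nat set" where
  "row_block m l = {l * m <.. l * m + m}"

lemma card_row_block: "card (row_block m l) = m"
  by (simp add: row_block_def)

lemma disjoint_family_row_block: "disjoint_family (row_block m)"
  unfolding disjoint_family_on_def
proof (intro ballI impI)
  fix l l' :: nat assume "l \<noteq> l'"
  then consider "Suc l \<le> l'" | "Suc l' \<le> l"
    by linarith
  then show "row_block m l \<inter> row_block m l' = {}"
  proof cases
    case 1
    then have "Suc l * m \<le> l' * m"
      by (rule mult_le_mono1)
    then show ?thesis
      by (auto simp: row_block_def)
  next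
    case 2
    then have "Suc l' * m \<le> l * m"
      by (rule mult_le_mono1)
    then show ?thesis
      by (auto simp: row_block_def)
  qed
qed

lemma row_block_subset:
  assumes "l < L" "L * m \<le> t"
  shows "row_block m l \<subseteq> {1..t}"
proof -
  have "Suc l * m \<le> L * m"
    using assms(1) by (intro mult_le_mono1) simp
  with assms(2) show ?thesis
    by (auto simp: row_block_def)
qed

lemma card_meeting_le:
  assumes "finite S" "disjoint_family_on F J"
  shows "card {j \<in> J. F j \<inter> S \<noteq> {}} \<le> card S"
proof -
  let ?M = "{j \<in> J. F j \<inter> S \<noteq> {}}"
  have "\<forall>j\<in>?M. \<exists>i. i \<in> F j \<inter> S"
    by blast
  from bchoice[OF this] obtain f where f: "\<forall>j\<in>?M. f j \<in> F j \<inter> S" ..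
  have "inj_on f ?M"
  proof (rule inj_onI)
    fix j j' assume "j \<in> ?M" "j' \<in> ?M" "f j = f j'"
    with f have "f j \<in> F j \<inter> F j'"
      by auto
    with \<open>j \<in> ?M\<close> \<open>j' \<in> ?M\<close> show "j = j'"
      using disjoint_family_onD[OF assms(2)] by blast
  qed
  moreover have "f ` ?M \<subseteq> S"
    using f by blast
  ultimately show ?thesis
    using assms(1) by (rule card_inj_on_le)
qed

lemma disjunct_if_few_blocks_without_z_rows:
  assumes "L * m \<le> t"
    and "\<And>A B. (A, B) \<in> disjoint_pairs n d r \<Longrightarrow>
           \<not> (\<exists>K\<subseteq>{..<L}. card K = k \<and> (\<forall>l\<in>K. \<forall>i\<in>row_block m l. T i \<in> - z_rows A B))"
  shows "disjunct t n T d r (L + 1 - k)"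
  unfolding disjunct_iff_z_rows
proof (intro ballI, clarify)
  fix A B assume AB: "(A, B) \<in> disjoint_pairs n d r"
  define Z where "Z = {i \<in> {1..t}. T i \<in> z_rows A B}"
  define free where "free = {l \<in> {..<L}. \<forall>i\<in>row_block m l. T i \<in> - z_rows A B}"
  have "card free < k"
  proof (rule ccontr)
    assume "\<not> card free < k"
    then obtain K where "K \<subseteq> free" "card K = k"
      by (meson not_less obtain_subset_with_card_n)
    with assms(2)[OF AB] show False
      unfolding free_def by blast
  qed
  have "{..<L} - free \<subseteq> {l \<in> {..<L}. row_block m l \<inter> Z \<noteq> {}}"
  proof
    fix l assume "l \<in> {..<L} - free"
    then obtain i where i: "i \<in> row_block m l" "T i \<in> z_rows A B" and "l < L"
      by (auto simp: free_def)
    then have "i \<in> {1..t}"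
      using row_block_subset[OF _ assms(1)] by blast
    with i \<open>l < L\<close> show "l \<in> {l \<in> {..<L}. row_block m l \<inter> Z \<noteq> {}}"
      by (auto simp: Z_def)
  qed
  then have "card ({..<L} - free) \<le> card {l \<in> {..<L}. row_block m l \<inter> Z \<noteq> {}}"
    by (intro card_mono) auto
  also have "\<dots> \<le> card Z"
    using disjoint_family_row_block by (intro card_meeting_le) (auto simp: Z_def disjoint_family_on_def)
  finally have "card ({..<L} - free) \<le> card Z" .
  moreover have "free \<subseteq> {..<L}"
    by (auto simp: free_def)
  then have "card ({..<L} - free) = L - card free"
    by (simp add: card_Diff_subset finite_subset)
  ultimately show "L + 1 - k \<le> card {i \<in> {1..t}. T i \<in> z_rows A B}"
    using \<open>card free < k\<close> unfolding Z_def by linarith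
qed

lemma inclusive_if_no_large_set_of_y_rows:
  assumes "\<And>A B. (A, B) \<in> disjoint_pairs n h r \<Longrightarrow>
           \<not> (\<exists>K\<subseteq>{1..t}. card K = k \<and> (\<forall>i\<in>K. T i \<in> y_rows A B))"
  shows "inclusive t n T h r (k - 1)"
  unfolding inclusive_iff_y_rows
proof (intro ballI, clarify)
  fix A B assume AB: "(A, B) \<in> disjoint_pairs n h r"
  show "card {i \<in> {1..t}. T i \<in> y_rows A B} \<le> k - 1"
  proof (rule ccontr)
    assume "\<not> ?thesis"
    then have "k \<le> card {i \<in> {1..t}. T i \<in> y_rows A B}"
      by linarith
    then obtain K where "K \<subseteq> {i \<in> {1..t}. T i \<in> y_rows A B}" "card K = k"
      by (meson obtain_subset_with_card_n)
    with assms[OF AB] show False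
      by blast
  qed
qed

lemma power_mult_one_minus_power_le_one:
  fixes p :: real
  assumes "0 \<le> p" "p \<le> 1"
  shows "p ^ a * (1 - p) ^ b \<le> 1"
  using assms by (intro mult_le_one) (auto intro: power_le_one)

lemma prob_blocks_without_z_rows_le:
  fixes p :: real
  assumes "0 \<le> p" "p \<le> 1" "L * m \<le> t" "(A, B) \<in> disjoint_pairs n d r"
  shows "measure_pmf.prob (bernoulli_matrix t n p)
      {T. \<exists>K\<subseteq>{..<L}. card K = k \<and> (\<forall>l\<in>K. \<forall>i\<in>row_block m l. T i \<in> - z_rows A B)}
    \<le> (L choose k) * (1 - p ^ r * (1 - p) ^ d) ^ (m * k)"
proof -
  have "measure_pmf.prob (bernoulli_row n p) (- z_rows A B) = 1 - p ^ r * (1 - p) ^ d"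
    using assms(1,2,4) measure_pmf.prob_compl[of "z_rows A B" "bernoulli_row n p"]
    by (simp add: prob_z_rows disjoint_pairs_def Compl_eq_Diff_UNIV)
  moreover have "disjoint_family_on (row_block m) {..<L}"
    using disjoint_family_row_block by (rule disjoint_family_on_mono[rotated]) simp
  then have "measure_pmf.prob (bernoulli_matrix t n p)
      {T. \<exists>K\<subseteq>{..<L}. card K = k \<and> (\<forall>l\<in>K. \<forall>i\<in>row_block m l. T i \<in> - z_rows A B)}
    \<le> (card {..<L} choose k) * measure_pmf.prob (bernoulli_row n p) (- z_rows A B) ^ (m * k)"
    unfolding bernoulli_matrix_def using row_block_subset[OF _ assms(3)]
    by (intro prob_Pi_pmf_some_blocks_all_in) (auto simp: card_row_block)
  ultimately show ?thesis
    by simp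
qed

lemma prob_many_y_rows_le:
  fixes p :: real
  assumes "0 \<le> p" "p \<le> 1" "(A, B) \<in> disjoint_pairs n h r"
  shows "measure_pmf.prob (bernoulli_matrix t n p) {T. \<exists>K\<subseteq>{1..t}. card K = k \<and> (\<forall>i\<in>K. T i \<in> y_rows A B)}
    \<le> (t choose k) * (real h * p ^ (r + 1)) ^ k"
proof -
  \<comment> \<open>rows are singleton blocks\<close>
  have "measure_pmf.prob (bernoulli_matrix t n p)
      {T. \<exists>K\<subseteq>{1..t}. card K = k \<and> (\<forall>j\<in>K. \<forall>i\<in>{j}. T i \<in> y_rows A B)}
    \<le> (card {1..t} choose k) * measure_pmf.prob (bernoulli_row n p) (y_rows A B) ^ (1 * k)"
    unfolding bernoulli_matrix_def
    by (rule prob_Pi_pmf_some_blocks_all_in) (auto simp: disjoint_family_on_def)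
  also have "\<dots> \<le> (t choose k) * (real h * p ^ (r + 1)) ^ k"
    using assms prob_y_rows_le[of A n B p]
    by (auto simp: disjoint_pairs_def intro!: mult_left_mono power_mono)
  finally show ?thesis
    by simp
qed

lemma exists_matrix_by_union_bound:
  fixes p :: real
  assumes p: "0 \<le> p" "p \<le> 1" and "L * m \<le> t"
    and small: "real ((n choose d) * (n choose r)) * (real (L choose k1) * (1 - p ^ r * (1 - p) ^ d) ^ (m * k1))
      + real ((n choose h) * (n choose r)) * (real (t choose k2) * (real h * p ^ (r + 1)) ^ k2) < 1"
  shows "\<exists>T. disjunct t n T d r (L + 1 - k1) \<and> inclusive t n T h r (k2 - 1)"
proof -
  let ?M = "bernoulli_matrix t n p"
  define few_z where "few_z A B =
    {T. \<exists>K\<subseteq>{..<L}. card K = k1 \<and> (\<forall>l\<in>K. \<forall>i\<in>row_block m l. T i \<in> - z_rows A B)}" for A B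
  define many_y where "many_y A B =
    {T. \<exists>K\<subseteq>{1..t}. card K = k2 \<and> (\<forall>i\<in>K. T i \<in> y_rows A B)}" for A B
  let ?X = "\<Union>(A, B)\<in>disjoint_pairs n d r. few_z A B"
  let ?Y = "\<Union>(A, B)\<in>disjoint_pairs n h r. many_y A B"
  have "measure_pmf.prob ?M ?X \<le> real ((n choose d) * (n choose r))
      * (real (L choose k1) * (1 - p ^ r * (1 - p) ^ d) ^ (m * k1))"
    using power_mult_one_minus_power_le_one[OF p] prob_blocks_without_z_rows_le[OF p \<open>L * m \<le> t\<close>]
    by (intro prob_UN_le_mult finite_disjoint_pairs card_disjoint_pairs_le) (auto simp: few_z_def)
  moreover have "measure_pmf.prob ?M ?Y \<le> real ((n choose h) * (n choose r))
      * (real (t choose k2) * (real h * p ^ (r + 1)) ^ k2)"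
    using p prob_many_y_rows_le[OF p]
    by (intro prob_UN_le_mult finite_disjoint_pairs card_disjoint_pairs_le) (auto simp: many_y_def)
  moreover have "measure_pmf.prob ?M (?X \<union> ?Y) \<le> measure_pmf.prob ?M ?X + measure_pmf.prob ?M ?Y"
    by (rule measure_Un_le) auto
  ultimately have "measure_pmf.prob ?M (?X \<union> ?Y) < 1"
    using small by linarith
  then have "?X \<union> ?Y \<noteq> UNIV"
    by auto
  then obtain T where T: "T \<notin> ?X" "T \<notin> ?Y"
    by blast
  have "disjunct t n T d r (L + 1 - k1)"
    using \<open>L * m \<le> t\<close>
  proof (rule disjunct_if_few_blocks_without_z_rows)
    fix A B assume "(A, B) \<in> disjoint_pairs n d r"
    with T(1) have "T \<notin> few_z A B"
      by fastforce
    then show "\<not> (\<exists>K\<subseteq>{..<L}. card K = k1 \<and> (\<forall>l\<in>K. \<forall>i\<in>row_block m l. T i \<in> - z_rows A B))"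
      by (simp add: few_z_def)
  qed
  moreover have "inclusive t n T h r (k2 - 1)"
  proof (rule inclusive_if_no_large_set_of_y_rows)
    fix A B assume "(A, B) \<in> disjoint_pairs n h r"
    with T(2) have "T \<notin> many_y A B"
      by fastforce
    then show "\<not> (\<exists>K\<subseteq>{1..t}. card K = k2 \<and> (\<forall>i\<in>K. T i \<in> y_rows A B))"
      by (simp add: many_y_def)
  qed
  ultimately show ?thesis
    by blast
qed

lemma power_div_fact_le_exp:
  fixes y :: real
  assumes "0 \<le> y"
  shows "y ^ k / fact k \<le> exp y"
proof -
  have "y ^ k / fact k = (\<Sum>n\<in>{k}. y ^ n / fact n)"
    by simp
  also have "\<dots> \<le> (\<Sum>n. y ^ n / fact n)"
    using assms summable_exp_generic[of y]
    by (intro sum_le_suminf) (auto simp: divide_inverse ac_simps)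
  also have "\<dots> = exp y"
    by (simp add: exp_def divide_inverse ac_simps)
  finally show ?thesis .
qed

lemma binomial_times_power_le_half_power:
  fixes q :: real
  assumes "0 \<le> q" "1 \<le> k" "real t * q \<le> real k / 8"
  shows "real (t choose k) * q ^ k \<le> (1 / 2) ^ k"
proof -
  have "real (t choose k) * fact k \<le> real t ^ k"
    using binomial_fact_pow[of t k] by (metis of_nat_fact of_nat_le_iff of_nat_mult of_nat_power)
  then have "real (t choose k) * q ^ k \<le> real t ^ k / fact k * q ^ k"
    using assms(1) by (intro mult_right_mono) (auto simp: field_simps)
  also have "\<dots> = (real t * q / real k) ^ k * (real k ^ k / fact k)"
    using assms(2) by (simp add: field_simps)
  also have "\<dots> \<le> (real t * q / real k) ^ k * exp 1 ^ k"
    using assms(1) power_div_fact_le_exp[of "real k" k]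
    by (intro mult_left_mono) (auto simp: exp_of_nat_mult[symmetric])
  also have "\<dots> = (real t * q / real k * exp 1) ^ k"
    by (simp only: power_mult_distrib)
  also have "\<dots> \<le> (1 / 2) ^ k"
  proof (rule power_mono)
    have "real t * q / real k \<le> 1 / 8"
      using assms by (simp add: field_simps)
    moreover have "exp (1 :: real) \<le> 3"
      by (rule exp_le)
    ultimately have "real t * q / real k * exp 1 \<le> 1 / 8 * 3"
      using assms(1) by (intro mult_mono) auto
    then show "real t * q / real k * exp 1 \<le> 1 / 2"
      by linarith
    show "0 \<le> real t * q / real k * exp 1"
      using assms(1) by simp
  qed
  finally show ?thesis .
qed

lemma miss_prob_power_le:
  fixes p :: real
  assumes "0 \<le> p" "p \<le> 1" "real d * p \<le> 1 / 2" "8 \<le> real m * p ^ r"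
  shows "(1 - p ^ r * (1 - p) ^ d) ^ m \<le> 1 / 16"
proof -
  define g where "g = p ^ r * (1 - p) ^ d"
  have "1 / 2 \<le> (1 - p) ^ d"
    using Bernoulli_inequality[of "- p" d] assms by simp
  then have "p ^ r / 2 \<le> g"
    unfolding g_def using assms(1) by (simp add: mult_left_mono[of "1/2" "(1 - p) ^ d" "p ^ r", simplified])
  have "g \<le> 1"
    unfolding g_def using assms(1,2) by (rule power_mult_one_minus_power_le_one)
  have "(1 - g) ^ m \<le> exp (- g) ^ m"
    using \<open>g \<le> 1\<close> exp_ge_add_one_self[of "- g"] by (intro power_mono) auto
  also have "\<dots> = exp (- (g * real m))"
    by (simp add: exp_of_nat_mult[symmetric] mult.commute)
  also have "\<dots> \<le> exp (- 4)"
  proof -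
    have "8 \<le> 2 * (g * real m)"
      using assms(4) mult_left_mono[OF \<open>p ^ r / 2 \<le> g\<close>, of "real m"] by (simp add: algebra_simps)
    then show ?thesis
      by simp
  qed
  also have "exp (- 4 :: real) \<le> 1 / 16"
  proof -
    have "(2 :: real) ^ 4 \<le> exp 1 ^ 4"
      using exp_ge_add_one_self[of 1] by (intro power_mono) auto
    then have "16 \<le> exp (4 :: real)"
      by (simp add: exp_of_nat_mult[symmetric])
    then show ?thesis
      by (simp add: exp_minus field_simps)
  qed
  finally show ?thesis
    by (simp add: g_def)
qed

lemma binomial_times_miss_prob_le:
  fixes p :: real
  assumes "0 \<le> p" "p \<le> 1" "real d * p \<le> 1 / 2" "8 \<le> real m * p ^ r" "L \<le> 2 * k"
  shows "real (L choose k) * (1 - p ^ r * (1 - p) ^ d) ^ (m * k) \<le> (1 / 2) ^ L"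
proof -
  have "0 \<le> 1 - p ^ r * (1 - p) ^ d"
    using power_mult_one_minus_power_le_one[OF assms(1,2)] by simp
  then have "real (L choose k) * (1 - p ^ r * (1 - p) ^ d) ^ (m * k) \<le> 2 ^ L * (1 / 16) ^ k"
    unfolding power_mult using miss_prob_power_le[OF assms(1-4)] binomial_le_pow2[of L k]
    by (intro mult_mono power_mono) (auto simp flip: of_nat_le_iff)
  also have "\<dots> \<le> (1 / 2) ^ L"
  proof -
    have "(4 :: real) ^ L \<le> 4 ^ (2 * k)"
      using assms(5) by (intro power_increasing) auto
    then have "(2 :: real) ^ L * 2 ^ L \<le> 16 ^ k"
      by (simp add: power_mult flip: power_mult_distrib)
    then show ?thesis
      by (simp add: field_simps power_divide)
  qed
  finally show ?thesis .
qed

lemma binomial_le_power: "1 \<le> n \<Longrightarrow> k \<le> K \<Longrightarrow> n choose k \<le> n ^ K"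
  by (metis binomial_eq_0 binomial_le_pow le_trans linorder_not_le power_increasing zero_le)

lemma exists_disjoint_pair_separating:
  assumes "j \<in> {1..n}" "j' \<in> {1..n}" "j \<noteq> j'" "1 \<le> a" "1 \<le> b" "a + b \<le> n"
  shows "\<exists>A B. (A, B) \<in> disjoint_pairs n a b \<and> j' \<in> A \<and> j \<in> B"
proof -
  define R where "R = {1..n} - {j, j'}"
  have "finite R" "card R = n - 2"
    using assms(1-3) by (auto simp: R_def card_Diff_subset)
  then have "b - 1 \<le> card R"
    using assms(4-6) by linarith
  then obtain B0 where B0: "B0 \<subseteq> R" "card B0 = b - 1" "finite B0"
    by (rule obtain_subset_with_card_n)
  then have "card (R - B0) = n - 2 - (b - 1)"
    using \<open>card R = n - 2\<close> by (simp add: card_Diff_subset)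
  then have "a - 1 \<le> card (R - B0)"
    using assms(4-6) by linarith
  then obtain A0 where A0: "A0 \<subseteq> R - B0" "card A0 = a - 1" "finite A0"
    by (rule obtain_subset_with_card_n)
  have "j' \<notin> A0" "j \<notin> B0" "j \<notin> A0" "j' \<notin> B0"
    using A0(1) B0(1) by (auto simp: R_def)
  then have "card (insert j' A0) = a" "card (insert j B0) = b"
    using A0(2,3) B0(2,3) assms(4,5) by simp_all
  moreover have "insert j' A0 \<subseteq> {1..n}" "insert j B0 \<subseteq> {1..n}"
    using A0(1) B0(1) assms(1,2) by (auto simp: R_def)
  moreover have "insert j' A0 \<inter> insert j B0 = {}"
    using A0(1) \<open>j \<notin> A0\<close> \<open>j' \<notin> B0\<close> assms(3) by auto
  ultimately show ?thesis
    unfolding disjoint_pairs_def by blast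
qed

lemma disjunct_inj_on_col:
  assumes "disjunct t n T d r z" "0 < z" "1 \<le> d" "1 \<le> r" "d + r \<le> n"
  shows "inj_on (col t T) {1..n}"
proof (rule inj_onI, rule ccontr)
  fix j j' assume "j \<in> {1..n}" "j' \<in> {1..n}" "col t T j = col t T j'" "j \<noteq> j'"
  moreover obtain A B where AB: "(A, B) \<in> disjoint_pairs n d r" "j' \<in> A" "j \<in> B"
    using exists_disjoint_pair_separating assms(3-5) calculation by blast
  ultimately have no_z: "({1..t} \<inter> (\<Inter>i\<in>B. col t T i)) - (\<Union>i\<in>A. col t T i) = {}"
    by blast
  have "z \<le> Zval t T A B"
    using assms(1) AB(1) by (auto simp: disjunct_def disjoint_pairs_def)
  also have "Zval t T A B = 0"
    unfolding Zval_def no_z by simp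
  finally show False
    using assms(2) by simp
qed

text \<open>The bound \<open>2 ^ t + d + r\<close> below is what makes the \<open>GREATEST\<close> in \<open>Nmax\<close> meaningful.\<close>

lemma incl_disjunct_le_Nmax:
  assumes "incl_disjunct t n T d h r x" "1 \<le> d" "1 \<le> r"
  shows "n \<le> Nmax t d h r x"
proof -
  have "n' \<le> 2 ^ t + d + r" if "incl_disjunct t n' T' d h r x" for n' T'
  proof (cases "d + r \<le> n'")
    case True
    from that obtain z where "0 < z" "disjunct t n' T' d r z"
      unfolding incl_disjunct_def by blast
    then have "inj_on (col t T') {1..n'}"
      using disjunct_inj_on_col True assms(2,3) by blast
    moreover have "col t T' ` {1..n'} \<subseteq> Pow {1..t}"
      by (auto simp: col_def)
    ultimately have "card {1..n'} \<le> card (Pow {1..t})"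
      by (intro card_inj_on_le) auto
    then show ?thesis
      by (simp add: card_Pow)
  qed simp
  then show ?thesis
    unfolding Nmax_def using assms(1) by (intro Greatest_le_nat[where b = "2 ^ t + d + r"]) blast+
qed

lemma Rate_ge_of_incl_disjunct:
  assumes "incl_disjunct t (2 ^ s) T d h r x" "1 \<le> d" "1 \<le> r"
  shows "real s / real t \<le> Rate t d h r x"
proof -
  have "(2 :: real) ^ s \<le> real (Nmax t d h r x)"
    using incl_disjunct_le_Nmax[OF assms] by (metis of_nat_le_iff of_nat_numeral of_nat_power)
  then have "log 2 (2 ^ s) \<le> log 2 (real (Nmax t d h r x))"
    by (subst log_le_cancel_iff) (auto intro: less_le_trans[of 0 "2 ^ s"])
  then show ?thesis
    unfolding Rate_def by (simp add: divide_right_mono)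
qed

lemma incl_disjunct_one_column:
  assumes "1 \<le> d" "1 \<le> r" "0 < x"
  shows "incl_disjunct t 1 T d h r x"
proof -
  have one_mem: "1 \<in> X" if "X \<subseteq> {1..1}" "1 \<le> card X" for X :: "nat set"
  proof -
    have "X \<noteq> {}"
      using that(2) by auto
    with that(1) show ?thesis
      by auto
  qed
  have "disjoint_pairs 1 d r = {}"
  proof (intro equals0I, clarify)
    fix A B assume "(A, B) \<in> disjoint_pairs 1 d r"
    then have "A \<subseteq> {1..1}" "B \<subseteq> {1..1}" "A \<inter> B = {}" "card A = d" "card B = r"
      by (simp_all add: disjoint_pairs_def)
    with one_mem[of A] one_mem[of B] assms(1,2) show False
      by auto
  qed
  then have "disjunct t 1 T d r x"
    by (simp add: disjunct_iff_z_rows)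
  have no_y_rows: "y_rows A B = {}" if "(A, B) \<in> disjoint_pairs 1 h r" for A B
  proof -
    have A: "A \<subseteq> {1..1}" "A \<inter> B = {}" and B: "B \<subseteq> {1..1}" "card B = r"
      using that by (simp_all add: disjoint_pairs_def)
    have "1 \<in> B"
      using B assms(2) by (intro one_mem) simp_all
    with A have "A = {}"
      by auto
    then show ?thesis
      by (simp add: y_rows_def)
  qed
  then have "inclusive t 1 T h r 0"
    by (auto simp: inclusive_iff_y_rows)
  with \<open>disjunct t 1 T d r x\<close> show ?thesis
    using assms(3) unfolding incl_disjunct_def by (intro exI[of _ x] exI[of _ 0]) simp
qed

lemma binomial_pair_le_power2:
  assumes "a \<le> D"
  shows "(2 ^ s choose a) * (2 ^ s choose b) \<le> (2 :: nat) ^ (s * (D + b))"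
proof -
  have "(2 ^ s choose a) * (2 ^ s choose b) \<le> (2 ^ s) ^ D * (2 ^ s) ^ b"
    using assms by (intro mult_le_mono binomial_le_power) auto
  also have "\<dots> = 2 ^ (s * (D + b))"
    by (simp add: power_add add_mult_distrib2 flip: power_mult)
  finally show ?thesis .
qed

definition block_len :: "nat \<Rightarrow> nat \<Rightarrow> nat" where
  "block_len r D = 8 * 512 ^ r * D ^ r"

definition entry_prob :: "nat \<Rightarrow> real" where
  "entry_prob D = 1 / (512 * real D)"

lemma block_len_pos: "1 \<le> D \<Longrightarrow> 0 < block_len r D"
  by (simp add: block_len_def)

lemma entry_prob_nonneg: "0 \<le> entry_prob D"
  by (simp add: entry_prob_def)

lemma entry_prob_le_one: "1 \<le> D \<Longrightarrow> entry_prob D \<le> 1"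
  by (simp add: entry_prob_def)

lemma real_mult_entry_prob: "1 \<le> D \<Longrightarrow> real D * entry_prob D = 1 / 512"
  by (simp add: entry_prob_def)

lemma block_len_mult_entry_prob_power: "1 \<le> D \<Longrightarrow> real (block_len r D) * entry_prob D ^ r = 8"
  by (simp add: block_len_def entry_prob_def power_divide power_mult_distrib)

lemma no_z_rows_tail_le:
  assumes "1 \<le> D" "d \<le> D" "L \<le> 2 * k"
  shows "real (L choose k) * (1 - entry_prob D ^ r * (1 - entry_prob D) ^ d) ^ (block_len r D * k)
    \<le> (1 / 2) ^ L"
proof (rule binomial_times_miss_prob_le[OF entry_prob_nonneg entry_prob_le_one[OF assms(1)]])
  have "real d * entry_prob D \<le> real D * entry_prob D"
    using assms(2) entry_prob_nonneg by (intro mult_right_mono) auto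
  then show "real d * entry_prob D \<le> 1 / 2"
    using real_mult_entry_prob[OF assms(1)] by simp
qed (use block_len_mult_entry_prob_power[OF assms(1)] assms(3) in auto)

lemma y_rows_tail_le:
  assumes "1 \<le> D" "h \<le> D" "1 \<le> k" "t \<le> block_len r D * (8 * k)"
  shows "real (t choose k) * (real h * entry_prob D ^ (r + 1)) ^ k \<le> (1 / 2) ^ k"
proof (rule binomial_times_power_le_half_power)
  let ?p = "entry_prob D" and ?m = "real (block_len r D)"
  have "real D * ?p ^ (r + 1) * ?m = (real D * ?p) * (?m * ?p ^ r)"
    by (simp add: algebra_simps)
  also have "\<dots> = 1 / 64"
    using assms(1) by (simp add: real_mult_entry_prob block_len_mult_entry_prob_power)
  finally have "real D * ?p ^ (r + 1) = 1 / (64 * ?m)"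
    using block_len_pos[OF assms(1)] by (simp add: field_simps)
  have "real t * (real h * ?p ^ (r + 1)) \<le> real t * (real D * ?p ^ (r + 1))"
    using assms(2) entry_prob_nonneg by (intro mult_left_mono mult_right_mono) auto
  also have "\<dots> = real t / (64 * ?m)"
    using \<open>real D * ?p ^ (r + 1) = 1 / (64 * ?m)\<close> by simp
  also have "\<dots> \<le> real k / 8"
  proof -
    have "real t \<le> ?m * (8 * real k)"
      using of_nat_mono[OF assms(4)] by simp
    with block_len_pos[OF assms(1), of r] show ?thesis
      by (simp add: field_simps)
  qed
  finally show "real t * (real h * ?p ^ (r + 1)) \<le> real k / 8" .
qed (use assms(3) entry_prob_nonneg in auto)

lemma union_bound_lt_one:
  fixes d h r s t k1 k2 L D :: nat
  defines "p \<equiv> entry_prob D" and "m \<equiv> block_len r D"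
  assumes "1 \<le> D" "d \<le> D" "h \<le> D" "s * (D + r) + 3 \<le> k2" "k2 \<le> L" "L \<le> 2 * k1"
    and "t \<le> m * (8 * k2)"
  shows "real ((2 ^ s choose d) * (2 ^ s choose r)) * (real (L choose k1) * (1 - p ^ r * (1 - p) ^ d) ^ (m * k1))
    + real ((2 ^ s choose h) * (2 ^ s choose r)) * (real (t choose k2) * (real h * p ^ (r + 1)) ^ k2) < 1"
proof -
  have weighted: "real c * q \<le> 1 / 8" if "c \<le> 2 ^ (s * (D + r))" "0 \<le> q" "q \<le> (1 / 2) ^ k2"
    for c :: nat and q :: real
  proof -
    have "(2 :: real) ^ (s * (D + r)) * 8 \<le> 2 ^ k2"
      using power_increasing[of "s * (D + r) + 3" k2 "2 :: real"] assms(6) by (simp add: power_add)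
    moreover have "real c \<le> 2 ^ (s * (D + r))"
      using of_nat_mono[OF that(1)] by (simp only: of_nat_power of_nat_numeral)
    ultimately have "8 * real c \<le> 2 ^ k2"
      by linarith
    then have "8 * real c * q \<le> 2 ^ k2 * (1 / 2) ^ k2"
      using that(2,3) by (intro mult_mono) auto
    then show ?thesis
      by (simp add: power_one_over)
  qed
  have z_term: "real ((2 ^ s choose d) * (2 ^ s choose r))
      * (real (L choose k1) * (1 - p ^ r * (1 - p) ^ d) ^ (m * k1)) \<le> 1 / 8"
  proof (rule weighted[OF binomial_pair_le_power2[OF assms(4)]])
    show "0 \<le> real (L choose k1) * (1 - p ^ r * (1 - p) ^ d) ^ (m * k1)"
      using power_mult_one_minus_power_le_one[OF entry_prob_nonneg entry_prob_le_one[OF assms(3)]]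
      by (simp add: p_def)
    have "real (L choose k1) * (1 - p ^ r * (1 - p) ^ d) ^ (m * k1) \<le> (1 / 2) ^ L"
      unfolding p_def m_def by (rule no_z_rows_tail_le[OF assms(3,4,8)])
    also have "\<dots> \<le> (1 / 2) ^ k2"
      using assms(7) by (intro power_decreasing) auto
    finally show "real (L choose k1) * (1 - p ^ r * (1 - p) ^ d) ^ (m * k1) \<le> (1 / 2) ^ k2" .
  qed
  have y_term: "real ((2 ^ s choose h) * (2 ^ s choose r))
      * (real (t choose k2) * (real h * p ^ (r + 1)) ^ k2) \<le> 1 / 8"
  proof (rule weighted[OF binomial_pair_le_power2[OF assms(5)]])
    show "0 \<le> real (t choose k2) * (real h * p ^ (r + 1)) ^ k2"
      using entry_prob_nonneg by (simp add: p_def)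
    show "real (t choose k2) * (real h * p ^ (r + 1)) ^ k2 \<le> (1 / 2) ^ k2"
      unfolding p_def using assms(3,5,6,9) by (intro y_rows_tail_le) (simp_all add: m_def)
  qed
  from z_term y_term show ?thesis
    by linarith
qed

lemma incl_disjunct_matrix_exists:
  assumes "1 \<le> d" "d \<le> D" "h \<le> D" "8 * x \<le> t div block_len r D"
    and "s * (D + r) + 3 \<le> (t div block_len r D + 1) div 8 + 1"
  shows "\<exists>T. incl_disjunct t (2 ^ s) T d h r x"
proof -
  define m where "m = block_len r D"
  define L where "L = t div m"
  define k1 where "k1 = L - L div 2"
  define k2 where "k2 = (L + 1) div 8 + 1"
  have "1 \<le> D" "0 < m"
    using assms(1,2) block_len_pos[of D r] by (simp_all add: m_def)
  have "L * m \<le> t"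
    by (simp add: L_def)
  have k: "s * (D + r) + 3 \<le> k2" "k2 \<le> L" "L \<le> 2 * k1" "L + 1 \<le> 8 * k2"
    using assms(5) by (simp_all add: k1_def k2_def L_def m_def)
  have "t < m + m * L"
    unfolding L_def using \<open>0 < m\<close> by (rule dividend_less_times_div)
  then have "t \<le> m * (8 * k2)"
    using mult_le_mono2[OF k(4), of m] by simp
  then obtain T where T: "disjunct t (2 ^ s) T d r (L + 1 - k1)" "inclusive t (2 ^ s) T h r (k2 - 1)"
    using exists_matrix_by_union_bound[OF entry_prob_nonneg entry_prob_le_one[OF \<open>1 \<le> D\<close>] \<open>L * m \<le> t\<close>]
      union_bound_lt_one[OF \<open>1 \<le> D\<close> assms(2,3) k(1-3)] unfolding m_def by blast
  have "L + 1 - k1 = L div 2 + 1" "k2 - 1 = (L + 1) div 8"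
    by (simp_all add: k1_def k2_def)
  moreover have "L \<le> L div 2 * 2 + 1" "(L + 1) div 8 * 8 \<le> L + 1"
    using div_mult_mod_eq[of L 2] mod_less_divisor[of 2 L] by simp_all
  ultimately have "x + (k2 - 1) \<le> L + 1 - k1"
    using assms(4) unfolding L_def m_def by linarith
  then have "int x \<le> int (L + 1 - k1) - int (k2 - 1)" "0 < L + 1 - k1"
    by (simp_all add: k1_def)
  with T show ?thesis
    unfolding incl_disjunct_def by blast
qed

lemma real_div_less_div_add_one:
  fixes a b :: nat
  assumes "0 < b"
  shows "real a / real b < real (a div b) + 1"
proof -
  have "a < b + b * (a div b)"
    using assms by (rule dividend_less_times_div)
  then have "real a < real b * (real (a div b) + 1)"
    by (simp add: algebra_simps flip: of_nat_mult of_nat_add)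
  with assms show ?thesis
    by (simp add: field_simps)
qed

lemma column_exponent_ge:
  fixes r t D :: nat
  defines "k \<equiv> (t div block_len r D + 1) div 8 + 1"
  assumes "1 \<le> D"
  shows "real t / (64 * 512 ^ r * (1 + real r) * real D ^ (r + 1)) - 4 \<le> real ((k - 3) div (D + r))"
proof -
  define m where "m = block_len r D"
  define e where "e = real (D + r)"
  have "real r * 1 \<le> real r * real D"
    using assms(2) by (intro mult_left_mono) auto
  then have "1 \<le> e" "e \<le> (1 + real r) * real D"
    using assms(2) by (simp_all add: e_def algebra_simps)
  have "real t / real m < real (t div m) + 1"
    using block_len_pos[OF assms(2)] by (simp add: m_def real_div_less_div_add_one)
  moreover have "t div m + 1 \<le> 8 * k"
    by (simp add: k_def m_def)
  then have "real (t div m) + 1 \<le> 8 * real k"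
    using of_nat_mono[OF \<open>t div m + 1 \<le> 8 * k\<close>] by simp
  ultimately have "real t / (8 * real m) \<le> real k"
    by simp
  have "real t / (64 * 512 ^ r * (1 + real r) * real D ^ (r + 1)) - 4
      = real t / (8 * real m) / ((1 + real r) * real D) - 4"
    by (simp add: m_def block_len_def field_simps)
  also have "\<dots> \<le> real t / (8 * real m) / e - 4"
    using \<open>1 \<le> e\<close> \<open>e \<le> (1 + real r) * real D\<close>
    by (intro diff_right_mono divide_left_mono) auto
  also have "\<dots> \<le> (real k - 3) / e - 1"
  proof -
    have "real t / (8 * real m) / e \<le> real k / e"
      using \<open>1 \<le> e\<close> \<open>real t / (8 * real m) \<le> real k\<close> by (intro divide_right_mono) auto
    moreover have "3 / e \<le> 3"
      using \<open>1 \<le> e\<close> by (simp add: field_simps)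
    ultimately show ?thesis
      by (simp add: diff_divide_distrib)
  qed
  also have "\<dots> \<le> real (k - 3) / e - 1"
    using \<open>1 \<le> e\<close> by (intro diff_right_mono divide_right_mono) auto
  also have "\<dots> \<le> real ((k - 3) div (D + r))"
    using real_div_less_div_add_one[of "D + r" "k - 3"] assms(2) by (simp add: e_def)
  finally show ?thesis .
qed

lemma exists_incl_disjunct_many_columns:
  fixes r d h t x :: nat
  assumes "0 < r" "1 \<le> d" "0 < x"
    and x_le: "real x \<le> real t / (64 * 512 ^ r * real (max d h) ^ r)"
  shows "\<exists>s. (\<exists>T. incl_disjunct t (2 ^ s) T d h r x) \<and>
    real t / (64 * 512 ^ r * (1 + real r) * real (max d h) ^ (r + 1)) - 4 \<le> real s"
proof -
  define D where "D = max d h"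
  define m where "m = block_len r D"
  define L where "L = t div m"
  define k where "k = (L + 1) div 8 + 1"
  define s where "s = (k - 3) div (D + r)"
  have "1 \<le> D" "d \<le> D" "h \<le> D" "0 < m"
    using assms(2) block_len_pos[of D r] by (auto simp: D_def m_def)
  have "real x \<le> real t / (8 * real m)"
    using x_le by (simp add: m_def D_def block_len_def)
  also have "\<dots> < (real L + 1) / 8"
    using real_div_less_div_add_one[OF \<open>0 < m\<close>, of t] by (simp add: L_def)
  finally have "real (8 * x) < real (L + 1)"
    by simp
  then have "8 * x \<le> L"
    by (simp only: of_nat_less_iff)
  have "\<exists>T. incl_disjunct t (2 ^ s) T d h r x"
  proof (cases "3 \<le> k")
    case True
    have "s * (D + r) \<le> k - 3"
      by (simp add: s_def)
    with True \<open>8 * x \<le> L\<close> show ?thesis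
      using incl_disjunct_matrix_exists[OF assms(2) \<open>d \<le> D\<close> \<open>h \<le> D\<close>]
      by (simp add: k_def L_def m_def)
  next
    case False
    then have "s = 0"
      by (simp add: s_def)
    then show ?thesis
      using incl_disjunct_one_column assms(1-3) by auto
  qed
  moreover have "real t / (64 * 512 ^ r * (1 + real r) * real D ^ (r + 1)) - 4 \<le> real s"
    unfolding s_def k_def L_def m_def by (rule column_exponent_ge[OF \<open>1 \<le> D\<close>])
  ultimately show ?thesis
    unfolding D_def by blast
qed

lemma Rate_ge:
  assumes "0 < r" "1 \<le> d" "0 < t" "0 < x"
    and "real x \<le> real t / (64 * 512 ^ r * real (max d h) ^ r)"
  shows "1 / (64 * 512 ^ r * (1 + real r) * real (max d h) ^ (r + 1)) - 4 / real t
    \<le> Rate t d h r x"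
proof -
  let ?Y = "64 * 512 ^ r * (1 + real r) * real (max d h) ^ (r + 1)"
  obtain s T where T: "incl_disjunct t (2 ^ s) T d h r x" and s: "real t / ?Y - 4 \<le> real s"
    using exists_incl_disjunct_many_columns[OF assms(1,2,4,5)] by blast
  have "1 / ?Y - 4 / real t = (real t / ?Y - 4) / real t"
    using assms(3) by (simp add: diff_divide_distrib)
  also have "\<dots> \<le> real s / real t"
    using s by (intro divide_right_mono) auto
  also have "\<dots> \<le> Rate t d h r x"
    using Rate_ge_of_incl_disjunct[OF T assms(2)] assms(1) by simp
  finally show ?thesis .
qed

theorem theorem3p1:
  fixes r :: nat
  assumes "r > 0"
  shows "\<exists>c0 c :: real. c0 > 0 \<and> c > 0 \<and>
    (\<forall>d h :: nat. d \<ge> 1 \<longrightarrow>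
      (\<exists>eps :: nat \<Rightarrow> real. eps \<longlonglongrightarrow> 0 \<and>
        (\<forall>t x :: nat. t > 0 \<longrightarrow> x > 0 \<longrightarrow>
            real x \<le> c0 / real (max d h) ^ r * real t \<longrightarrow>
            Rate t d h r x \<ge> (c + eps t) / real (max d h) ^ (r + 1))))"
proof -
  define c0 :: real where "c0 = 1 / (64 * 512 ^ r)"
  define c :: real where "c = c0 / (1 + real r)"
  have "\<exists>eps :: nat \<Rightarrow> real. eps \<longlonglongrightarrow> 0 \<and>
      (\<forall>t x :: nat. t > 0 \<longrightarrow> x > 0 \<longrightarrow> real x \<le> c0 / real (max d h) ^ r * real t \<longrightarrow>
         Rate t d h r x \<ge> (c + eps t) / real (max d h) ^ (r + 1))" if d: "1 \<le> d" for d h :: nat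
  proof (intro exI[of _ "\<lambda>t. - 4 * real (max d h) ^ (r + 1) / real t"] conjI allI impI)
    let ?X = "real (max d h) ^ (r + 1)"
    show "(\<lambda>t. - 4 * ?X / real t) \<longlonglongrightarrow> 0"
      by (rule lim_const_over_n)
    fix t x :: nat assume "0 < t" "0 < x" and "real x \<le> c0 / real (max d h) ^ r * real t"
    then have rate: "c / ?X - 4 / real t \<le> Rate t d h r x"
      using Rate_ge[OF assms d] by (simp add: c_def c0_def)
    have shift: "(c + - 4 * X / real t) / X = c / X - 4 / real t" if "0 < X" for X :: real
      using that \<open>0 < t\<close> by (simp add: field_simps)
    have "0 < ?X"
      using d by (intro zero_less_power) simp
    with rate show "(c + - 4 * ?X / real t) / ?X \<le> Rate t d h r x"
      by (simp only: shift)
  qed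
  moreover have "0 < c0" "0 < c"
    by (simp_all add: c0_def c_def)
  ultimately show ?thesis
    by blast
qed

end
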